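(* The perimeter $L^\dagger$ of the focus-inversive triangle is the same for all 3-periodics of $\mathcal{E}$, namely \[L^\dagger=\rho^2\,\frac{\sqrt{(8a^4+4a^2b^2+2b^4)\delta+8a^6+3a^2b^4+2b^6}}{a^2b^2}.\]
   Context: Let $a>b>0$ and let $\mathcal{E}$ be the ellipse $x^2/a^2+y^2/b^2=1$ (the elliptic billiard). Set $c=\sqrt{a^2-b^2}$, $\delta=\sqrt{a^4-a^2b^2+b^4}$, and let the foci be $f_1=(-c,0)$, $f_2=(c,0)$. A 3-periodic is a triangle $P_1P_2P_3$ with vertices on $\mathcal{E}$ such that at each vertex the normal to $\mathcal{E}$ bisects the angle formed by the two sides meeting at that vertex; these form a one-parameter family (there is one through every point of $\mathcal{E}$). Fix $\rho>0$. The focus-inversive triangle of a 3-periodic $P_1P_2P_3$ is the triangle with vertices $P_i^\dagger=f_1+(\rho/d_{1,i})^2(P_i-f_1)$, where $d_{1,i}=|P_i-f_1|$, i.e. the inversions of the $P_i$ in the circle of radius $\rho$ centered at $f_1$. *)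

theory Defs
  imports "HOL-Analysis.Analysis"
begin

(* Points of the plane are represented as complex numbers x + i y. *)

definition on_ellipse :: "real \<Rightarrow> real \<Rightarrow> complex \<Rightarrow> bool" where
  "on_ellipse a b P \<longleftrightarrow> (Re P)\<^sup>2 / a\<^sup>2 + (Im P)\<^sup>2 / b\<^sup>2 = 1"

definition ellipse_normal :: "real \<Rightarrow> real \<Rightarrow> complex \<Rightarrow> complex" where
  "ellipse_normal a b P = Complex (Re P / a\<^sup>2) (Im P / b\<^sup>2)"

definition cross2 :: "complex \<Rightarrow> complex \<Rightarrow> real" where
  "cross2 u v = Re u * Im v - Im u * Re v"

(* at vertex P with neighbours Q, R, the normal line bisects the angle QPR:
   the sum of the unit vectors from P towards Q and R is parallel to the normal *)
definition normal_bisects :: "real \<Rightarrow> real \<Rightarrow> complex \<Rightarrow> complex \<Rightarrow> complex \<Rightarrow> bool" where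
  "normal_bisects a b P Q R \<longleftrightarrow>
     cross2 (ellipse_normal a b P) ((Q - P) / of_real (norm (Q - P)) + (R - P) / of_real (norm (R - P))) = 0"

definition three_periodic :: "real \<Rightarrow> real \<Rightarrow> complex \<Rightarrow> complex \<Rightarrow> complex \<Rightarrow> bool" where
  "three_periodic a b P1 P2 P3 \<longleftrightarrow>
     on_ellipse a b P1 \<and> on_ellipse a b P2 \<and> on_ellipse a b P3 \<and>
     P1 \<noteq> P2 \<and> P2 \<noteq> P3 \<and> P1 \<noteq> P3 \<and>
     normal_bisects a b P1 P2 P3 \<and> normal_bisects a b P2 P3 P1 \<and> normal_bisects a b P3 P1 P2"

definition invert :: "complex \<Rightarrow> real \<Rightarrow> complex \<Rightarrow> complex" where
  "invert f \<rho> P = f + of_real ((\<rho> / norm (P - f))\<^sup>2) * (P - f)"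

definition perimeter :: "complex \<Rightarrow> complex \<Rightarrow> complex \<Rightarrow> real" where
  "perimeter A B C = dist A B + dist B C + dist C A"

end

theory Submission
  imports Defs
begin

(*
  Write polar_defect P Q = 1 - <P, Q>, with <P, Q> the bilinear form of the ellipse.
  Because the normal at a vertex bisects the angle there, polar_defect P Q / |PQ|
  takes the same value k at both sides through that vertex, hence on all three sides
  (Joachimsthal's integral). In the rational parametrisation t of the ellipse each
  side becomes a quadratic relation between the parameters of its ends. Vieta's
  formulas for the two sides through t1 force k to satisfy a quartic, and make the
  cyclic sum of (ti - tj)^2 R(tk) a constant multiple of R(t1) R(t2) R(t3), where
  R(t) / (1 + t^2) is the distance to the focus. Inversion maps a side PQ to one of
  length rho^2 |PQ| / (|P - f| |Q - f|), so the inverted perimeter is rho^2 / k times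
  that constant, which the quartic evaluates.
*)

lemma quadratic_vieta:
  fixes A B C x y :: "'a :: idom"
  assumes "A * x\<^sup>2 + B * x + C = 0" "A * y\<^sup>2 + B * y + C = 0" "x \<noteq> y"
  shows "A * (x + y) = - B" "A * (x * y) = C"
proof -
  have "(x - y) * (A * (x + y) + B) = 0"
    using assms(1,2) by algebra
  then show sum: "A * (x + y) = - B"
    using assms(3) by (simp add: eq_neg_iff_add_eq_0)
  show "A * (x * y) = C"
    using assms(1) sum by algebra
qed

(* chord_poly a b k s t = 0 says that the chord of the ellipse between the points with
   parameters s and t has Joachimsthal integral k (see chord_poly_ellipse_point). *)
definition chord_poly :: "real \<Rightarrow> real \<Rightarrow> real \<Rightarrow> real \<Rightarrow> real \<Rightarrow> real" where
  "chord_poly a b k s t = k\<^sup>2 * (a\<^sup>2 * (s + t)\<^sup>2 + b\<^sup>2 * (1 - s * t)\<^sup>2) - (s - t)\<^sup>2"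

lemma chord_poly_vieta:
  fixes a b k s t u :: real
  assumes "chord_poly a b k s t = 0" "chord_poly a b k s u = 0" "t \<noteq> u"
  shows "(k\<^sup>2 * (a\<^sup>2 + b\<^sup>2 * s\<^sup>2) - 1) * (t + u) = - 2 * s * (k\<^sup>2 * (a\<^sup>2 - b\<^sup>2) + 1)"
    and "(k\<^sup>2 * (a\<^sup>2 + b\<^sup>2 * s\<^sup>2) - 1) * (t * u) = k\<^sup>2 * (a\<^sup>2 * s\<^sup>2 + b\<^sup>2) - s\<^sup>2"
proof -
  have quadratic: "chord_poly a b k s x = (k\<^sup>2 * (a\<^sup>2 + b\<^sup>2 * s\<^sup>2) - 1) * x\<^sup>2
      + 2 * s * (k\<^sup>2 * (a\<^sup>2 - b\<^sup>2) + 1) * x + (k\<^sup>2 * (a\<^sup>2 * s\<^sup>2 + b\<^sup>2) - s\<^sup>2)" for x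
    unfolding chord_poly_def by algebra
  from quadratic_vieta[OF assms(1,2)[unfolded quadratic] assms(3)]
  show "(k\<^sup>2 * (a\<^sup>2 + b\<^sup>2 * s\<^sup>2) - 1) * (t + u) = - 2 * s * (k\<^sup>2 * (a\<^sup>2 - b\<^sup>2) + 1)"
    and "(k\<^sup>2 * (a\<^sup>2 + b\<^sup>2 * s\<^sup>2) - 1) * (t * u) = k\<^sup>2 * (a\<^sup>2 * s\<^sup>2 + b\<^sup>2) - s\<^sup>2"
    by simp_all
qed

lemma chord_poly_lead_coeff_nonzero:
  fixes a b k s t u :: real
  assumes "k \<noteq> 0" "b \<noteq> 0" "b\<^sup>2 \<le> a\<^sup>2"
    and sum: "(k\<^sup>2 * (a\<^sup>2 + b\<^sup>2 * s\<^sup>2) - 1) * (t + u) = - 2 * s * (k\<^sup>2 * (a\<^sup>2 - b\<^sup>2) + 1)"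
    and prod: "(k\<^sup>2 * (a\<^sup>2 + b\<^sup>2 * s\<^sup>2) - 1) * (t * u) = k\<^sup>2 * (a\<^sup>2 * s\<^sup>2 + b\<^sup>2) - s\<^sup>2"
  shows "k\<^sup>2 * (a\<^sup>2 + b\<^sup>2 * s\<^sup>2) - 1 \<noteq> 0"
proof
  assume lead: "k\<^sup>2 * (a\<^sup>2 + b\<^sup>2 * s\<^sup>2) - 1 = 0"
  have "k\<^sup>2 * (a\<^sup>2 - b\<^sup>2) + 1 > 0"
    using assms(3) by (simp add: add_nonneg_pos)
  then have "s = 0" using sum lead by simp
  then show False using prod lead assms(1,2) by simp
qed

lemma joachimsthal_quartic:
  fixes a b k t1 t2 t3 :: real
  assumes "a \<noteq> 0" "b \<noteq> 0" "k \<noteq> 0"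
    and "chord_poly a b k t1 t2 = 0" "chord_poly a b k t1 t3 = 0" "chord_poly a b k t2 t3 = 0"
    and "t2 \<noteq> t3"
  shows "(a\<^sup>2 - b\<^sup>2)\<^sup>2 * k ^ 4 + 2 * (a\<^sup>2 + b\<^sup>2) * k\<^sup>2 - 3 = 0"
proof -
  note vieta = chord_poly_vieta[OF assms(4,5,7)]
  have "k\<^sup>2 * ((a\<^sup>2 - b\<^sup>2)\<^sup>2 * k ^ 4 + 2 * (a\<^sup>2 + b\<^sup>2) * k\<^sup>2 - 3) * (b\<^sup>2 * (1 - t1\<^sup>2)\<^sup>2 + 4 * a\<^sup>2 * t1\<^sup>2) = 0"
    using vieta assms(6) unfolding chord_poly_def by algebra
  moreover have "b\<^sup>2 * (1 - t1\<^sup>2)\<^sup>2 + 4 * a\<^sup>2 * t1\<^sup>2 > 0"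
    using assms(1,2) by (cases "t1 = 0") (auto intro: add_nonneg_pos add_pos_nonneg)
  ultimately show ?thesis using assms(3) by simp
qed

(* focal_poly a (e * c) t / (1 + t^2) is the distance from the point with parameter t
   to the focus (- c, 0) (see dist_ellipse_point_focus). *)
definition focal_poly :: "real \<Rightarrow> real \<Rightarrow> real \<Rightarrow> real" where
  "focal_poly a c t = (a + c) + (a - c) * t\<^sup>2"

definition cyclic_focal_coeff :: "real \<Rightarrow> real \<Rightarrow> real \<Rightarrow> real" where
  "cyclic_focal_coeff a b k = 2 * (2 * a ^ 4 - 2 * a\<^sup>2 * b\<^sup>2 - b ^ 4) + (2 * a\<^sup>2 - b\<^sup>2) * ((a\<^sup>2 - b\<^sup>2)\<^sup>2 * k\<^sup>2 + a\<^sup>2 + b\<^sup>2)"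

lemma focal_cyclic_sum:
  fixes a b c k s t u :: real
  assumes bc: "b\<^sup>2 = a\<^sup>2 - c\<^sup>2"
    and quartic: "(a\<^sup>2 - b\<^sup>2)\<^sup>2 * k ^ 4 + 2 * (a\<^sup>2 + b\<^sup>2) * k\<^sup>2 - 3 = 0"
    and sum: "(k\<^sup>2 * (a\<^sup>2 + b\<^sup>2 * s\<^sup>2) - 1) * (t + u) = - 2 * s * (k\<^sup>2 * (a\<^sup>2 - b\<^sup>2) + 1)"
    and prod: "(k\<^sup>2 * (a\<^sup>2 + b\<^sup>2 * s\<^sup>2) - 1) * (t * u) = k\<^sup>2 * (a\<^sup>2 * s\<^sup>2 + b\<^sup>2) - s\<^sup>2"
    and lead: "k\<^sup>2 * (a\<^sup>2 + b\<^sup>2 * s\<^sup>2) - 1 \<noteq> 0"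
  shows "4 * a\<^sup>2 * b\<^sup>2 * c\<^sup>2 * ((s - t)\<^sup>2 * focal_poly a c u + (t - u)\<^sup>2 * focal_poly a c s + (u - s)\<^sup>2 * focal_poly a c t)
    = cyclic_focal_coeff a b k * (focal_poly a c s * focal_poly a c t * focal_poly a c u)"
    (is "?lhs = ?rhs")
proof -
  define D where "D = k\<^sup>2 * (a\<^sup>2 + b\<^sup>2 * s\<^sup>2) - 1"
  \<comment> \<open>?lhs - ?rhs is symmetric in t, u; H expresses D^2 times it through D (t + u) and
    D t u, which the Vieta relations turn into polynomials in s\<close>
  define H where "H \<sigma> \<pi> \<equiv>
    4 * a\<^sup>2 * b\<^sup>2 * c\<^sup>2 * ((\<sigma>\<^sup>2 - 4 * \<pi> * D) * focal_poly a c s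
       + (a + c) * (2 * s\<^sup>2 * D\<^sup>2 - 2 * s * \<sigma> * D + \<sigma>\<^sup>2 - 2 * \<pi> * D)
       + (a - c) * (s\<^sup>2 * (\<sigma>\<^sup>2 - 2 * \<pi> * D) - 2 * s * \<pi> * \<sigma> + 2 * \<pi>\<^sup>2))
    - cyclic_focal_coeff a b k * focal_poly a c s
      * ((a + c)\<^sup>2 * D\<^sup>2 + (a + c) * (a - c) * (\<sigma>\<^sup>2 - 2 * \<pi> * D) + (a - c)\<^sup>2 * \<pi>\<^sup>2)"
    for \<sigma> \<pi>
  have b4: "b ^ 4 = (b\<^sup>2)\<^sup>2" by simp
  have "D\<^sup>2 * (?lhs - ?rhs) = H (D * (t + u)) (D * (t * u))"
    unfolding H_def focal_poly_def by algebra
  also have "\<dots> = 0"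
    unfolding H_def sum[folded D_def] prod[folded D_def]
    using quartic unfolding D_def focal_poly_def cyclic_focal_coeff_def bc b4 by algebra
  finally show ?thesis using lead unfolding D_def by simp
qed

lemma focal_cyclic_sum_of_chords:
  fixes a b c k t1 t2 t3 :: real
  assumes "0 < b" "b < a" "c\<^sup>2 = a\<^sup>2 - b\<^sup>2" "k \<noteq> 0" "t2 \<noteq> t3"
    and "chord_poly a b k t1 t2 = 0" "chord_poly a b k t1 t3 = 0"
    and quartic: "(a\<^sup>2 - b\<^sup>2)\<^sup>2 * k ^ 4 + 2 * (a\<^sup>2 + b\<^sup>2) * k\<^sup>2 - 3 = 0"
  shows "4 * a\<^sup>2 * b\<^sup>2 * (a\<^sup>2 - b\<^sup>2) * ((t1 - t2)\<^sup>2 * focal_poly a c t3 + (t2 - t3)\<^sup>2 * focal_poly a c t1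
      + (t3 - t1)\<^sup>2 * focal_poly a c t2) = cyclic_focal_coeff a b k * (focal_poly a c t1 * focal_poly a c t2 * focal_poly a c t3)"
proof -
  note vieta = chord_poly_vieta[OF assms(6,7,5)]
  have "b \<noteq> 0" "b\<^sup>2 \<le> a\<^sup>2" using assms(1,2) by (auto simp: power_mono)
  note lead = chord_poly_lead_coeff_nonzero[OF assms(4) this vieta]
  have "b\<^sup>2 = a\<^sup>2 - c\<^sup>2" using assms(3) by simp
  from focal_cyclic_sum[OF this quartic vieta lead] show ?thesis
    unfolding assms(3) .
qed

lemma add_divide_cyclic:
  fixes x y z X Y Z :: "'a :: field"
  assumes "X \<noteq> 0" "Y \<noteq> 0" "Z \<noteq> 0"
  shows "x / (X * Y) + y / (Y * Z) + z / (Z * X) = (x * Z + y * X + z * Y) / (X * Y * Z)"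
  using assms by (simp add: field_simps)

lemma quartic_form_nonneg:
  fixes a b :: real
  shows "0 \<le> a ^ 4 - a\<^sup>2 * b\<^sup>2 + b ^ 4"
proof -
  have "0 \<le> (a\<^sup>2 - b\<^sup>2)\<^sup>2 + (a * b)\<^sup>2" by simp
  also have "\<dots> = a ^ 4 - a\<^sup>2 * b\<^sup>2 + b ^ 4" by algebra
  finally show ?thesis .
qed

lemma joachimsthal_quartic_root:
  fixes a b k :: real
  assumes "0 < b" "b < a"
    and quartic: "(a\<^sup>2 - b\<^sup>2)\<^sup>2 * k ^ 4 + 2 * (a\<^sup>2 + b\<^sup>2) * k\<^sup>2 - 3 = 0"
  shows "(a\<^sup>2 - b\<^sup>2)\<^sup>2 * k\<^sup>2 = 2 * sqrt (a ^ 4 - a\<^sup>2 * b\<^sup>2 + b ^ 4) - a\<^sup>2 - b\<^sup>2"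
proof -
  define \<delta> where "\<delta> = sqrt (a ^ 4 - a\<^sup>2 * b\<^sup>2 + b ^ 4)"
  define K where "K = (a\<^sup>2 - b\<^sup>2)\<^sup>2 * k\<^sup>2"
  have \<delta>_sq: "\<delta>\<^sup>2 = a ^ 4 - a\<^sup>2 * b\<^sup>2 + b ^ 4"
    unfolding \<delta>_def using quartic_form_nonneg by simp
  have "\<delta> \<ge> 0" unfolding \<delta>_def using quartic_form_nonneg by simp
  have "(K - (2 * \<delta> - a\<^sup>2 - b\<^sup>2)) * (K + 2 * \<delta> + a\<^sup>2 + b\<^sup>2) = (a\<^sup>2 - b\<^sup>2)\<^sup>2 * ((a\<^sup>2 - b\<^sup>2)\<^sup>2 * k ^ 4 + 2 * (a\<^sup>2 + b\<^sup>2) * k\<^sup>2 - 3)"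
    unfolding K_def using \<delta>_sq by algebra
  moreover have "K + 2 * \<delta> + a\<^sup>2 + b\<^sup>2 > 0"
  proof -
    have "K \<ge> 0" "a\<^sup>2 \<ge> 0" "b\<^sup>2 > 0" unfolding K_def using \<open>0 < b\<close> by simp_all
    then show ?thesis using \<open>\<delta> \<ge> 0\<close> by linarith
  qed
  ultimately have "K = 2 * \<delta> - a\<^sup>2 - b\<^sup>2" using quartic by simp
  then show ?thesis unfolding K_def \<delta>_def .
qed

lemma focus_inversive_perimeter_value:
  fixes a b k :: real
  assumes "0 < b" "b < a" "k > 0"
    and quartic: "(a\<^sup>2 - b\<^sup>2)\<^sup>2 * k ^ 4 + 2 * (a\<^sup>2 + b\<^sup>2) * k\<^sup>2 - 3 = 0"
  shows "cyclic_focal_coeff a b k / (2 * k * a\<^sup>2 * b\<^sup>2 * (a\<^sup>2 - b\<^sup>2))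
    = sqrt ((8 * a ^ 4 + 4 * a\<^sup>2 * b\<^sup>2 + 2 * b ^ 4) * sqrt (a ^ 4 - a\<^sup>2 * b\<^sup>2 + b ^ 4)
        + 8 * a ^ 6 + 3 * a\<^sup>2 * b ^ 4 + 2 * b ^ 6) / (a\<^sup>2 * b\<^sup>2)"
proof -
  define \<delta> where "\<delta> = sqrt (a ^ 4 - a\<^sup>2 * b\<^sup>2 + b ^ 4)"
  define m where "m = 2 * a ^ 4 - 2 * a\<^sup>2 * b\<^sup>2 - b ^ 4 + (2 * a\<^sup>2 - b\<^sup>2) * \<delta>"
  have \<delta>_sq: "\<delta>\<^sup>2 = a ^ 4 - a\<^sup>2 * b\<^sup>2 + b ^ 4"
    unfolding \<delta>_def using quartic_form_nonneg by simp
  have b_lt_a: "b\<^sup>2 < a\<^sup>2" using assms(1,2) by (simp add: power_strict_mono)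
  have root: "(k * (a\<^sup>2 - b\<^sup>2))\<^sup>2 = 2 * \<delta> - a\<^sup>2 - b\<^sup>2"
    using joachimsthal_quartic_root[OF assms(1,2) quartic] unfolding \<delta>_def
    by (simp add: power_mult_distrib mult.commute)
  have scale_pos: "k * (a\<^sup>2 - b\<^sup>2) > 0" using assms(3) b_lt_a by simp
  then have "2 * \<delta> - a\<^sup>2 - b\<^sup>2 > 0" using root by (metis zero_less_power2 less_irrefl)
  have "2 * m = 3 * (2 * a\<^sup>2 + b\<^sup>2) * (a\<^sup>2 - b\<^sup>2) + (2 * a\<^sup>2 - b\<^sup>2) * (2 * \<delta> - a\<^sup>2 - b\<^sup>2)"
    unfolding m_def by algebra
  moreover have "(2 * a\<^sup>2 - b\<^sup>2) * (2 * \<delta> - a\<^sup>2 - b\<^sup>2) > 0"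
    using b_lt_a zero_le_power2[of a] \<open>2 * \<delta> - a\<^sup>2 - b\<^sup>2 > 0\<close> by (intro mult_pos_pos) linarith+
  ultimately have "m > 0" using b_lt_a assms(1) by (smt (verit) mult_pos_pos zero_less_power)
  have sqrt_eq: "sqrt ((8 * a ^ 4 + 4 * a\<^sup>2 * b\<^sup>2 + 2 * b ^ 4) * \<delta> + 8 * a ^ 6 + 3 * a\<^sup>2 * b ^ 4 + 2 * b ^ 6)
      = m / (k * (a\<^sup>2 - b\<^sup>2))"
  proof (rule real_sqrt_unique)
    have "m\<^sup>2 = ((8 * a ^ 4 + 4 * a\<^sup>2 * b\<^sup>2 + 2 * b ^ 4) * \<delta> + 8 * a ^ 6 + 3 * a\<^sup>2 * b ^ 4 + 2 * b ^ 6)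
        * (2 * \<delta> - a\<^sup>2 - b\<^sup>2)"
      unfolding m_def using \<delta>_sq by algebra
    then show "(m / (k * (a\<^sup>2 - b\<^sup>2)))\<^sup>2 = (8 * a ^ 4 + 4 * a\<^sup>2 * b\<^sup>2 + 2 * b ^ 4) * \<delta> + 8 * a ^ 6 + 3 * a\<^sup>2 * b ^ 4 + 2 * b ^ 6"
      using root \<open>2 * \<delta> - a\<^sup>2 - b\<^sup>2 > 0\<close> by (simp add: power_divide)
    show "0 \<le> m / (k * (a\<^sup>2 - b\<^sup>2))" using \<open>m > 0\<close> scale_pos by simp
  qed
  have "cyclic_focal_coeff a b k = 2 * m"
    using root unfolding m_def cyclic_focal_coeff_def by algebra
  then have "cyclic_focal_coeff a b k / (2 * k * a\<^sup>2 * b\<^sup>2 * (a\<^sup>2 - b\<^sup>2)) = (m / (k * (a\<^sup>2 - b\<^sup>2))) / (a\<^sup>2 * b\<^sup>2)"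
    by (simp add: divide_divide_eq_left ac_simps)
  then show ?thesis unfolding \<delta>_def[symmetric] sqrt_eq .
qed

lemma one_add_power2_pos: "0 < 1 + (t :: real)\<^sup>2"
  by (simp add: add_pos_nonneg)

lemma one_add_power2_neq_0: "1 + (t :: real)\<^sup>2 \<noteq> 0"
  using one_add_power2_pos[of t] by linarith

lemma inner_eq_if_cross2_add_eq_0:
  fixes n u v :: complex
  assumes "norm u = norm v" "cross2 n (u + v) = 0" "n \<bullet> u < 0" "n \<bullet> v < 0"
  shows "n \<bullet> u = n \<bullet> v"
proof -
  have lagrange: "(n \<bullet> w)\<^sup>2 + (cross2 n w)\<^sup>2 = (norm n * norm w)\<^sup>2" for w
    unfolding inner_complex_def cross2_def power_mult_distrib cmod_power2 by algebra
  have "cross2 n v = - cross2 n u"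
    using assms(2) unfolding cross2_def by (simp add: algebra_simps)
  then have "(n \<bullet> u)\<^sup>2 = (n \<bullet> v)\<^sup>2"
    using lagrange[of u] lagrange[of v] assms(1) by simp
  then show ?thesis
    using assms(3,4) by (auto simp: power2_eq_iff)
qed

lemma inner_divide_of_real:
  fixes n z :: complex
  shows "n \<bullet> (z / of_real r) = (n \<bullet> z) / r"
  unfolding inner_complex_def by (simp add: add_divide_distrib)

(* polar_defect a b P Q / dist P Q is the Joachimsthal integral of the chord PQ. *)
definition polar_defect :: "real \<Rightarrow> real \<Rightarrow> complex \<Rightarrow> complex \<Rightarrow> real" where
  "polar_defect a b P Q = 1 - Re P * Re Q / a\<^sup>2 - Im P * Im Q / b\<^sup>2"

lemma polar_defect_commute: "polar_defect a b P Q = polar_defect a b Q P"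
  unfolding polar_defect_def by (simp add: mult.commute)

lemma polar_defect_on_ellipse:
  assumes "on_ellipse a b P" "on_ellipse a b Q"
  shows "2 * polar_defect a b P Q = (Re P - Re Q)\<^sup>2 / a\<^sup>2 + (Im P - Im Q)\<^sup>2 / b\<^sup>2"
  using assms unfolding on_ellipse_def polar_defect_def
  by (simp add: power2_diff diff_divide_distrib add_divide_distrib)

lemma polar_defect_pos:
  assumes "a \<noteq> 0" "b \<noteq> 0" "on_ellipse a b P" "on_ellipse a b Q" "P \<noteq> Q"
  shows "polar_defect a b P Q > 0"
proof -
  have "Re P \<noteq> Re Q \<or> Im P \<noteq> Im Q" using assms(5) complex_eq_iff by blast
  then have "(Re P - Re Q)\<^sup>2 / a\<^sup>2 + (Im P - Im Q)\<^sup>2 / b\<^sup>2 > 0"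
    using assms(1,2) by (auto intro: add_pos_nonneg add_nonneg_pos)
  then show ?thesis using polar_defect_on_ellipse[OF assms(3,4)] by simp
qed

lemma inner_ellipse_normal:
  assumes "on_ellipse a b P"
  shows "ellipse_normal a b P \<bullet> (Q - P) = - polar_defect a b P Q"
  using assms unfolding on_ellipse_def polar_defect_def ellipse_normal_def inner_complex_def
  by (simp add: power2_eq_square algebra_simps diff_divide_distrib)

lemma normal_bisects_polar_ratio:
  assumes "a \<noteq> 0" "b \<noteq> 0" "on_ellipse a b P" "on_ellipse a b Q" "on_ellipse a b R"
    and "Q \<noteq> P" "R \<noteq> P" "normal_bisects a b P Q R"
  shows "polar_defect a b P Q / dist P Q = polar_defect a b P R / dist P R"
proof -
  define n where "n = ellipse_normal a b P"
  have unit: "norm ((X - P) / of_real (norm (X - P))) = 1" if "X \<noteq> P" for X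
    using that by (simp add: norm_divide)
  have inner: "n \<bullet> ((X - P) / of_real (norm (X - P))) = - (polar_defect a b P X / dist P X)"
    if "on_ellipse a b X" for X
    unfolding n_def inner_divide_of_real inner_ellipse_normal[OF assms(3)]
    by (simp add: dist_norm norm_minus_commute)
  have neg: "n \<bullet> ((X - P) / of_real (norm (X - P))) < 0" if "on_ellipse a b X" "X \<noteq> P" for X
    unfolding inner[OF that(1)]
    using polar_defect_pos[OF assms(1,2,3) that(1)] that(2) by (simp add: dist_commute)
  have "n \<bullet> ((Q - P) / of_real (norm (Q - P))) = n \<bullet> ((R - P) / of_real (norm (R - P)))"
    using assms(8) unfolding normal_bisects_def n_def[symmetric]
    by (intro inner_eq_if_cross2_add_eq_0)
      (simp_all add: unit neg assms(4-7))
  then show ?thesis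
    unfolding inner[OF assms(4)] inner[OF assms(5)] by simp
qed

lemma three_periodic_rotate: "three_periodic a b P1 P2 P3 \<Longrightarrow> three_periodic a b P2 P3 P1"
  unfolding three_periodic_def by auto

lemma three_periodic_joachimsthal:
  assumes "a \<noteq> 0" "b \<noteq> 0" "three_periodic a b P1 P2 P3"
  obtains k where "k > 0"
    and "polar_defect a b P1 P2 = k * dist P1 P2"
    and "polar_defect a b P2 P3 = k * dist P2 P3"
    and "polar_defect a b P1 P3 = k * dist P1 P3"
proof -
  have on: "on_ellipse a b P1" "on_ellipse a b P2" "on_ellipse a b P3"
    and ne: "P1 \<noteq> P2" "P2 \<noteq> P3" "P1 \<noteq> P3"
    and nb: "normal_bisects a b P1 P2 P3" "normal_bisects a b P2 P3 P1"
    using assms(3) unfolding three_periodic_def by auto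
  define k where "k = polar_defect a b P1 P2 / dist P1 P2"
  have "polar_defect a b P1 P3 / dist P1 P3 = k"
    unfolding k_def using normal_bisects_polar_ratio[OF assms(1,2) on(1,2,3)] ne nb(1) by auto
  moreover have "polar_defect a b P2 P3 / dist P2 P3 = k"
    unfolding k_def using normal_bisects_polar_ratio[OF assms(1,2) on(2,3,1)] ne nb(2)
    by (auto simp: polar_defect_commute dist_commute)
  moreover have "k > 0"
    unfolding k_def using polar_defect_pos[OF assms(1,2) on(1,2) ne(1)] ne(1) by simp
  ultimately show ?thesis
    using that[of k] ne unfolding k_def by (simp add: divide_eq_eq)
qed

lemma on_ellipse_Im_eq_0_iff:
  assumes "a \<noteq> 0" "b \<noteq> 0" "on_ellipse a b P"
  shows "Im P = 0 \<longleftrightarrow> Re P = a \<or> Re P = - a"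
proof -
  have "Im P = 0 \<longleftrightarrow> (Im P)\<^sup>2 / b\<^sup>2 = 0" using assms(2) by simp
  also have "\<dots> \<longleftrightarrow> (Re P)\<^sup>2 / a\<^sup>2 = 1" using assms(3) unfolding on_ellipse_def by (intro iffI; linarith)
  also have "\<dots> \<longleftrightarrow> (Re P)\<^sup>2 = a\<^sup>2" using assms(1) by (auto simp: divide_eq_1_iff)
  also have "\<dots> \<longleftrightarrow> Re P = a \<or> Re P = - a" by (simp add: power2_eq_iff)
  finally show ?thesis .
qed

lemma normal_bisects_axis:
  assumes "a \<noteq> 0" "Re P \<noteq> 0" "Im P = 0" "Im Q = 0" "R \<noteq> P" "normal_bisects a b P Q R"
  shows "Im R = 0"
proof -
  have "Re P / a\<^sup>2 * (Im R / norm (R - P)) = 0"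
    using assms(3,4,6) unfolding normal_bisects_def cross2_def ellipse_normal_def by simp
  then show ?thesis using assms(1,2,5) by simp
qed

(* The normal at an axis vertex is horizontal, so if a second vertex were on the axis,
   the bisection condition would put the third one there too. *)
lemma three_periodic_axis_vertex:
  assumes "a \<noteq> 0" "b \<noteq> 0" "three_periodic a b P1 P2 P3" "Im P1 = 0"
  shows "Im P2 \<noteq> 0"
proof
  assume "Im P2 = 0"
  have on: "on_ellipse a b P1" "on_ellipse a b P2" "on_ellipse a b P3"
    and ne: "P1 \<noteq> P2" "P2 \<noteq> P3" "P1 \<noteq> P3" and nb: "normal_bisects a b P1 P2 P3"
    using assms(3) unfolding three_periodic_def by auto
  note axis = on_ellipse_Im_eq_0_iff[OF assms(1,2)]
  have "Re P1 \<noteq> 0" using axis[OF on(1)] assms(1,4) by auto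
  then have "Im P3 = 0"
    using normal_bisects_axis[OF assms(1) _ assms(4) \<open>Im P2 = 0\<close> ne(3)[symmetric] nb] by simp
  have "Re P1 \<noteq> Re P2" "Re P2 \<noteq> Re P3" "Re P1 \<noteq> Re P3"
    using ne assms(4) \<open>Im P2 = 0\<close> \<open>Im P3 = 0\<close> by (metis complex_eqI)+
  moreover have "Re P1 = a \<or> Re P1 = - a" "Re P2 = a \<or> Re P2 = - a" "Re P3 = a \<or> Re P3 = - a"
    using axis[OF on(1)] axis[OF on(2)] axis[OF on(3)] assms(4) \<open>Im P2 = 0\<close> \<open>Im P3 = 0\<close> by simp_all
  ultimately show False by auto
qed

lemma three_periodic_opposite_vertex:
  assumes "a \<noteq> 0" "b \<noteq> 0" "three_periodic a b P1 P2 P3" "Re P1 = - a"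
  shows "Re P2 \<noteq> a \<and> Re P3 \<noteq> a"
proof -
  have on: "on_ellipse a b P1" "on_ellipse a b P2" "on_ellipse a b P3"
    using assms(3) unfolding three_periodic_def by auto
  note axis = on_ellipse_Im_eq_0_iff[OF assms(1,2)]
  have "Im P1 = 0" using axis[OF on(1)] assms(4) by simp
  moreover have "three_periodic a b P3 P1 P2"
    using three_periodic_rotate[OF three_periodic_rotate[OF assms(3)]] .
  ultimately have "Im P2 \<noteq> 0" "Im P3 \<noteq> 0"
    using three_periodic_axis_vertex[OF assms(1,2)] assms(3) by blast+
  then show ?thesis using axis[OF on(2)] axis[OF on(3)] by simp
qed

lemma three_periodic_param_sign:
  assumes "a \<noteq> 0" "b \<noteq> 0" "three_periodic a b P1 P2 P3"
  obtains e where "e\<^sup>2 = 1" "Re P1 \<noteq> - e * a" "Re P2 \<noteq> - e * a" "Re P3 \<noteq> - e * a"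
proof (cases "Re P1 = - a \<or> Re P2 = - a \<or> Re P3 = - a")
  case False
  then show ?thesis using that[of 1] by simp
next
  case True
  note opposite = three_periodic_opposite_vertex[OF assms(1,2)]
  note rot = three_periodic_rotate[OF assms(3)] three_periodic_rotate[OF three_periodic_rotate[OF assms(3)]]
  have "Re P1 \<noteq> a" "Re P2 \<noteq> a" "Re P3 \<noteq> a"
    using True assms(1) opposite[OF assms(3)] opposite[OF rot(1)] opposite[OF rot(2)] by auto
  then show ?thesis using that[of "-1"] by simp
qed

(* Rational parametrisation from the major vertex (- e a, 0), the one point it misses;
   the sign e = 1 or -1 is chosen so that this vertex is not a vertex of the triangle. *)
definition ellipse_point :: "real \<Rightarrow> real \<Rightarrow> real \<Rightarrow> real \<Rightarrow> complex" where
  "ellipse_point a b e t = Complex (e * a * (1 - t\<^sup>2) / (1 + t\<^sup>2)) (2 * b * t / (1 + t\<^sup>2))"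

lemma ellipse_point_surj:
  assumes "a > 0" "b > 0" "e\<^sup>2 = 1" "on_ellipse a b P" "Re P \<noteq> - e * a"
  shows "\<exists>t. P = ellipse_point a b e t"
proof -
  define x where "x = e * Re P"
  \<comment> \<open>the slope of the chord from (-1, 0) to (x / a, Im P / b) on the unit circle\<close>
  define t where "t = a * Im P / (b * (a + x))"
  have Re_P: "Re P = e * x" and "x\<^sup>2 = (Re P)\<^sup>2"
    using assms(3) unfolding x_def by (simp_all add: power2_eq_square flip: mult.assoc)
  then have ellipse: "x\<^sup>2 / a\<^sup>2 + (Im P)\<^sup>2 / b\<^sup>2 = 1"
    using assms(4) unfolding on_ellipse_def by simp
  then have Im_sq: "(Im P)\<^sup>2 = b\<^sup>2 * (a\<^sup>2 - x\<^sup>2) / a\<^sup>2"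
    using assms(1,2) by (simp add: field_simps)
  have "x \<noteq> - a" using assms(5) Re_P by auto
  have "x\<^sup>2 \<le> a\<^sup>2"
  proof -
    have "(Im P)\<^sup>2 / b\<^sup>2 \<ge> 0" by simp
    then have "x\<^sup>2 / a\<^sup>2 \<le> 1" using ellipse by linarith
    then show ?thesis using assms(1) by (simp add: divide_le_eq_1)
  qed
  then have "\<bar>x\<bar> \<le> a" using abs_le_square_iff[of x a] assms(1) by simp
  then have "a + x > 0" using \<open>x \<noteq> - a\<close> by linarith
  have "t\<^sup>2 = a\<^sup>2 * (Im P)\<^sup>2 / (b\<^sup>2 * (a + x)\<^sup>2)"
    unfolding t_def by (simp add: power_divide power_mult_distrib)
  also have "\<dots> = (a\<^sup>2 - x\<^sup>2) / (a + x)\<^sup>2"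
    using assms(1,2) unfolding Im_sq by simp
  also have "\<dots> = (a - x) / (a + x)"
    using \<open>a + x > 0\<close> by (simp add: power2_eq_square square_diff_square_factored)
  finally have "t\<^sup>2 = (a - x) / (a + x)" .
  then have plus: "1 + t\<^sup>2 = 2 * a / (a + x)" and minus: "1 - t\<^sup>2 = 2 * x / (a + x)"
    using \<open>a + x > 0\<close> by (simp_all add: field_simps)
  have "e * a * (1 - t\<^sup>2) / (1 + t\<^sup>2) = Re P"
    unfolding plus minus Re_P using \<open>a + x > 0\<close> assms(1) by (simp add: divide_simps)
  moreover have "2 * b * t / (1 + t\<^sup>2) = Im P"
    unfolding plus using \<open>a + x > 0\<close> assms(1,2) by (simp add: t_def divide_simps)
  ultimately have "P = ellipse_point a b e t"
    unfolding ellipse_point_def complex_eq_iff by simp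
  then show ?thesis ..
qed

lemma polar_defect_ellipse_point:
  assumes "a \<noteq> 0" "b \<noteq> 0" "e\<^sup>2 = 1"
  shows "polar_defect a b (ellipse_point a b e s) (ellipse_point a b e t)
    = 2 * (s - t)\<^sup>2 / ((1 + s\<^sup>2) * (1 + t\<^sup>2))"
  using assms one_add_power2_neq_0[of s] one_add_power2_neq_0[of t]
  unfolding polar_defect_def ellipse_point_def
  by (simp add: divide_simps) algebra

lemma norm_diff_ellipse_point:
  assumes "e\<^sup>2 = 1"
  shows "(norm (ellipse_point a b e s - ellipse_point a b e t))\<^sup>2
    = 4 * (s - t)\<^sup>2 * (a\<^sup>2 * (s + t)\<^sup>2 + b\<^sup>2 * (1 - s * t)\<^sup>2) / ((1 + s\<^sup>2) * (1 + t\<^sup>2))\<^sup>2"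
  using assms one_add_power2_neq_0[of s] one_add_power2_neq_0[of t]
  unfolding cmod_power2 ellipse_point_def
  by (simp add: divide_simps) algebra

lemma chord_poly_ellipse_point:
  assumes "a \<noteq> 0" "b \<noteq> 0" "e\<^sup>2 = 1" "s \<noteq> t"
    and "polar_defect a b (ellipse_point a b e s) (ellipse_point a b e t)
      = k * dist (ellipse_point a b e s) (ellipse_point a b e t)"
  shows "chord_poly a b k s t = 0"
proof -
  define E where "E = (1 + s\<^sup>2) * (1 + t\<^sup>2)"
  define G where "G = a\<^sup>2 * (s + t)\<^sup>2 + b\<^sup>2 * (1 - s * t)\<^sup>2"
  have "E \<noteq> 0" unfolding E_def using one_add_power2_neq_0 by simp
  have "(2 * (s - t)\<^sup>2 / E)\<^sup>2 = k\<^sup>2 * (4 * (s - t)\<^sup>2 * G / E\<^sup>2)"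
    using assms(5) unfolding polar_defect_ellipse_point[OF assms(1-3)] dist_norm
    by (simp add: power_mult_distrib norm_diff_ellipse_point[OF assms(3)] E_def G_def)
  then have "(s - t)\<^sup>2 * ((s - t)\<^sup>2 - k\<^sup>2 * G) = 0"
    using \<open>E \<noteq> 0\<close> by (simp add: field_simps)
  then show ?thesis
    using assms(4) unfolding chord_poly_def G_def by simp
qed

lemma focal_poly_pos:
  assumes "\<bar>c\<bar> < a"
  shows "focal_poly a c t > 0"
proof -
  have "(a - c) * t\<^sup>2 \<ge> 0" using assms by simp
  then show ?thesis unfolding focal_poly_def using assms by linarith
qed

lemma abs_focal_offset_less:
  fixes a b c e :: real
  assumes "0 < b" "b < a" "c\<^sup>2 = a\<^sup>2 - b\<^sup>2" "e\<^sup>2 = 1"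
  shows "\<bar>e * c\<bar> < a"
proof (rule power2_less_imp_less)
  show "\<bar>e * c\<bar>\<^sup>2 < a\<^sup>2" using assms by (simp add: power_mult_distrib)
qed (use assms in simp)

lemma dist_ellipse_point_focus:
  assumes "e\<^sup>2 = 1" "c\<^sup>2 = a\<^sup>2 - b\<^sup>2" "\<bar>e * c\<bar> < a"
  shows "dist (ellipse_point a b e t) (Complex (- c) 0) = focal_poly a (e * c) t / (1 + t\<^sup>2)"
proof (rule power2_eq_imp_eq)
  show "(dist (ellipse_point a b e t) (Complex (- c) 0))\<^sup>2 = (focal_poly a (e * c) t / (1 + t\<^sup>2))\<^sup>2"
    using assms(1,2) one_add_power2_neq_0[of t]
    unfolding dist_norm cmod_power2 ellipse_point_def focal_poly_def
    by (simp add: divide_simps) algebra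
  show "0 \<le> focal_poly a (e * c) t / (1 + t\<^sup>2)"
    using focal_poly_pos[OF assms(3)] one_add_power2_pos by (simp add: less_imp_le)
qed simp

lemma invert_eq_inverse_cnj:
  assumes "P \<noteq> f"
  shows "invert f \<rho> P = f + of_real (\<rho>\<^sup>2) * inverse (cnj (P - f))"
proof -
  have "inverse (cnj (P - f)) = (P - f) / of_real ((norm (P - f))\<^sup>2)"
    using assms complex_norm_square[of "P - f"] by (simp add: field_simps)
  then show ?thesis
    unfolding invert_def by (simp add: power_divide field_simps)
qed

lemma dist_invert:
  assumes "P \<noteq> f" "Q \<noteq> f"
  shows "dist (invert f \<rho> P) (invert f \<rho> Q) = \<rho>\<^sup>2 * dist P Q / (dist P f * dist Q f)"
proof -
  have "invert f \<rho> P - invert f \<rho> Q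
      = of_real (\<rho>\<^sup>2) * (cnj (Q - P) / (cnj (P - f) * cnj (Q - f)))"
    using assms unfolding invert_eq_inverse_cnj[OF assms(1)] invert_eq_inverse_cnj[OF assms(2)]
    by (simp add: field_simps)
  then show ?thesis
    by (simp add: dist_norm norm_mult norm_divide norm_power norm_minus_commute del: complex_cnj_diff)
qed

lemma dist_invert_ellipse_points:
  assumes "0 < b" "b < a" "c\<^sup>2 = a\<^sup>2 - b\<^sup>2" "e\<^sup>2 = 1" "k > 0"
    and "polar_defect a b (ellipse_point a b e s) (ellipse_point a b e t)
      = k * dist (ellipse_point a b e s) (ellipse_point a b e t)"
  shows "dist (invert (Complex (- c) 0) \<rho> (ellipse_point a b e s)) (invert (Complex (- c) 0) \<rho> (ellipse_point a b e t))
    = \<rho>\<^sup>2 / k * (2 * (s - t)\<^sup>2 / (focal_poly a (e * c) s * focal_poly a (e * c) t))"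
proof -
  have "\<bar>e * c\<bar> < a" using abs_focal_offset_less[OF assms(1-4)] .
  note focus = dist_ellipse_point_focus[OF assms(4,3) this]
  have focal_pos: "focal_poly a (e * c) x > 0" for x
    using focal_poly_pos[OF \<open>\<bar>e * c\<bar> < a\<close>] .
  have not_focus: "ellipse_point a b e x \<noteq> Complex (- c) 0" for x
    using focus[of x] focal_pos[of x] one_add_power2_pos[of x] by auto
  have "dist (ellipse_point a b e s) (ellipse_point a b e t) = 2 * (s - t)\<^sup>2 / ((1 + s\<^sup>2) * (1 + t\<^sup>2)) / k"
    using assms(5,6) polar_defect_ellipse_point[of a b e s t] assms(1,2,4) by auto
  moreover have "r * (x / (A * B) / k) / ((C / A) * (D / B)) = r / k * (x / (C * D))"
    if "A \<noteq> 0" "B \<noteq> 0" "C \<noteq> 0" "D \<noteq> 0" for r x A B C D :: real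
    using that assms(5) by (simp add: field_simps)
  ultimately show ?thesis
    unfolding dist_invert[OF not_focus not_focus] focus
    using focal_pos[of s] focal_pos[of t] one_add_power2_neq_0[of s] one_add_power2_neq_0[of t]
    by simp
qed

lemma focus_inversive_perimeter_ellipse_points:
  fixes a b c e k \<rho> t1 t2 t3 :: real
  assumes "0 < b" "b < a" "c\<^sup>2 = a\<^sup>2 - b\<^sup>2" "e\<^sup>2 = 1" "k > 0"
    and "t1 \<noteq> t2" "t2 \<noteq> t3" "t1 \<noteq> t3"
    and polar12: "polar_defect a b (ellipse_point a b e t1) (ellipse_point a b e t2)
      = k * dist (ellipse_point a b e t1) (ellipse_point a b e t2)"
    and polar23: "polar_defect a b (ellipse_point a b e t2) (ellipse_point a b e t3)
      = k * dist (ellipse_point a b e t2) (ellipse_point a b e t3)"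
    and polar13: "polar_defect a b (ellipse_point a b e t1) (ellipse_point a b e t3)
      = k * dist (ellipse_point a b e t1) (ellipse_point a b e t3)"
  shows "perimeter (invert (Complex (- c) 0) \<rho> (ellipse_point a b e t1))
      (invert (Complex (- c) 0) \<rho> (ellipse_point a b e t2)) (invert (Complex (- c) 0) \<rho> (ellipse_point a b e t3))
    = \<rho>\<^sup>2 * sqrt ((8 * a ^ 4 + 4 * a\<^sup>2 * b\<^sup>2 + 2 * b ^ 4) * sqrt (a ^ 4 - a\<^sup>2 * b\<^sup>2 + b ^ 4)
        + 8 * a ^ 6 + 3 * a\<^sup>2 * b ^ 4 + 2 * b ^ 6) / (a\<^sup>2 * b\<^sup>2)"
proof -
  define R where "R x = focal_poly a (e * c) x" for x
  have "a \<noteq> 0" "b \<noteq> 0" "k \<noteq> 0" "b\<^sup>2 < a\<^sup>2"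
    using assms(1,2,5) by (auto simp: power_strict_mono)
  note chord = chord_poly_ellipse_point[OF \<open>a \<noteq> 0\<close> \<open>b \<noteq> 0\<close> assms(4)]
  have chord12: "chord_poly a b k t1 t2 = 0" and chord13: "chord_poly a b k t1 t3 = 0"
    and chord23: "chord_poly a b k t2 t3 = 0"
    using chord assms(6-8) polar12 polar13 polar23 by blast+
  have quartic: "(a\<^sup>2 - b\<^sup>2)\<^sup>2 * k ^ 4 + 2 * (a\<^sup>2 + b\<^sup>2) * k\<^sup>2 - 3 = 0"
    using joachimsthal_quartic[OF \<open>a \<noteq> 0\<close> \<open>b \<noteq> 0\<close> \<open>k \<noteq> 0\<close> chord12 chord13 chord23 assms(7)] .
  have "(e * c)\<^sup>2 = a\<^sup>2 - b\<^sup>2" using assms(3,4) by (simp add: power_mult_distrib)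
  note cyclic = focal_cyclic_sum_of_chords[OF assms(1,2) this \<open>k \<noteq> 0\<close> assms(7) chord12 chord13 quartic,
      folded R_def]
  have R_pos: "R x > 0" for x
    unfolding R_def using focal_poly_pos abs_focal_offset_less[OF assms(1-4)] by blast
  have "R t1 * R t2 * R t3 \<noteq> 0" using R_pos[of t1] R_pos[of t2] R_pos[of t3] by simp
  moreover have "4 * a\<^sup>2 * b\<^sup>2 * (a\<^sup>2 - b\<^sup>2) \<noteq> 0" using \<open>a \<noteq> 0\<close> \<open>b \<noteq> 0\<close> \<open>b\<^sup>2 < a\<^sup>2\<close> by simp
  ultimately have cyclic_ratio: "((t1 - t2)\<^sup>2 * R t3 + (t2 - t3)\<^sup>2 * R t1 + (t3 - t1)\<^sup>2 * R t2) / (R t1 * R t2 * R t3)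
      = cyclic_focal_coeff a b k / (4 * a\<^sup>2 * b\<^sup>2 * (a\<^sup>2 - b\<^sup>2))"
    using cyclic by (subst frac_eq_eq) (simp_all add: mult.commute)
  have polar31: "polar_defect a b (ellipse_point a b e t3) (ellipse_point a b e t1)
      = k * dist (ellipse_point a b e t3) (ellipse_point a b e t1)"
    using polar13 by (metis polar_defect_commute dist_commute)
  note side = dist_invert_ellipse_points[OF assms(1-5), folded R_def]
  have "perimeter (invert (Complex (- c) 0) \<rho> (ellipse_point a b e t1))
      (invert (Complex (- c) 0) \<rho> (ellipse_point a b e t2)) (invert (Complex (- c) 0) \<rho> (ellipse_point a b e t3))
    = \<rho>\<^sup>2 / k * (2 * (t1 - t2)\<^sup>2 / (R t1 * R t2) + 2 * (t2 - t3)\<^sup>2 / (R t2 * R t3) + 2 * (t3 - t1)\<^sup>2 / (R t3 * R t1))"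
    unfolding perimeter_def side[OF polar12] side[OF polar23] side[OF polar31]
    by (simp add: distrib_left)
  also have "\<dots> = \<rho>\<^sup>2 / k * (2 * (((t1 - t2)\<^sup>2 * R t3 + (t2 - t3)\<^sup>2 * R t1 + (t3 - t1)\<^sup>2 * R t2) / (R t1 * R t2 * R t3)))"
    using R_pos[of t1] R_pos[of t2] R_pos[of t3] by (simp add: add_divide_cyclic)
  also have "\<dots> = \<rho>\<^sup>2 * (cyclic_focal_coeff a b k / (2 * k * a\<^sup>2 * b\<^sup>2 * (a\<^sup>2 - b\<^sup>2)))"
    unfolding cyclic_ratio by (simp add: divide_divide_eq_left ac_simps)
  also have "\<dots> = \<rho>\<^sup>2 * sqrt ((8 * a ^ 4 + 4 * a\<^sup>2 * b\<^sup>2 + 2 * b ^ 4) * sqrt (a ^ 4 - a\<^sup>2 * b\<^sup>2 + b ^ 4)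
        + 8 * a ^ 6 + 3 * a\<^sup>2 * b ^ 4 + 2 * b ^ 6) / (a\<^sup>2 * b\<^sup>2)"
    unfolding focus_inversive_perimeter_value[OF assms(1,2,5) quartic] by simp
  finally show ?thesis .
qed

theorem mainTheorem4:
  fixes a b \<rho> :: real and P1 P2 P3 :: complex
  assumes "a > b" "b > 0" "\<rho> > 0"
    and "three_periodic a b P1 P2 P3"
  defines "c \<equiv> sqrt (a\<^sup>2 - b\<^sup>2)"
    and "\<delta> \<equiv> sqrt (a ^ 4 - a\<^sup>2 * b\<^sup>2 + b ^ 4)"
  defines "f1 \<equiv> Complex (- c) 0"
  shows "perimeter (invert f1 \<rho> P1) (invert f1 \<rho> P2) (invert f1 \<rho> P3)
       = \<rho>\<^sup>2 * sqrt ((8 * a ^ 4 + 4 * a\<^sup>2 * b\<^sup>2 + 2 * b ^ 4) * \<delta> + 8 * a ^ 6 + 3 * a\<^sup>2 * b ^ 4 + 2 * b ^ 6)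
           / (a\<^sup>2 * b\<^sup>2)"
proof -
  have "a > 0" "a \<noteq> 0" "b \<noteq> 0" using assms(1,2) by auto
  have c_sq: "c\<^sup>2 = a\<^sup>2 - b\<^sup>2"
    unfolding c_def using assms(1,2) by (simp add: power_mono)
  obtain k where "k > 0" and polar: "polar_defect a b P1 P2 = k * dist P1 P2"
      "polar_defect a b P2 P3 = k * dist P2 P3" "polar_defect a b P1 P3 = k * dist P1 P3"
    using three_periodic_joachimsthal[OF \<open>a \<noteq> 0\<close> \<open>b \<noteq> 0\<close> assms(4)] .
  obtain e where e: "e\<^sup>2 = 1" "Re P1 \<noteq> - e * a" "Re P2 \<noteq> - e * a" "Re P3 \<noteq> - e * a"
    using three_periodic_param_sign[OF \<open>a \<noteq> 0\<close> \<open>b \<noteq> 0\<close> assms(4)] .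
  have on: "on_ellipse a b P1" "on_ellipse a b P2" "on_ellipse a b P3"
    and "P1 \<noteq> P2" "P2 \<noteq> P3" "P1 \<noteq> P3"
    using assms(4) unfolding three_periodic_def by auto
  obtain t1 t2 t3 where P: "P1 = ellipse_point a b e t1" "P2 = ellipse_point a b e t2"
      "P3 = ellipse_point a b e t3"
    using ellipse_point_surj[OF \<open>a > 0\<close> assms(2) e(1)] e(2-4) on by metis
  with \<open>P1 \<noteq> P2\<close> \<open>P2 \<noteq> P3\<close> \<open>P1 \<noteq> P3\<close> have "t1 \<noteq> t2" "t2 \<noteq> t3" "t1 \<noteq> t3" by auto
  from focus_inversive_perimeter_ellipse_points[OF assms(2,1) c_sq e(1) \<open>k > 0\<close> this polar[unfolded P]]
  show ?thesis unfolding f1_def \<delta>_def P .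
qed

end
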